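(* Let $q\ge 3$, $k\ge 1$ and $h\geq 2$ be integers with $h\le\lfloor q/2\rfloor$. Then $$SO(L_{q,h,k})=(2qk-5k+5)\sqrt{2}+(4k-4)\sqrt{13}.$$
   Context: For a finite simple graph $G$, $SO(G)=\sum_{uv\in E(G)}\sqrt{d_u^2+d_v^2}$, where $d_u$ is the degree of $u$ in $G$ (the Sombor index). The graph $L_{q,h,k}$ is the link of $k$ disjoint copies $G_1,\ldots,G_k$ of the cycle $C_q$ with respect to vertices $x_i,y_i\in V(G_i)$ at distance $h$ in $G_i$; i.e. it is obtained from the disjoint union of the $k$ cycles by adding the edges $y_ix_{i+1}$ for $i=1,\ldots,k-1$. *)

theory Defs
  imports Complex_Main
begin

definition simple_graph :: "'a set \<Rightarrow> 'a set set \<Rightarrow> bool" where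
  "simple_graph V E \<longleftrightarrow> finite V \<and> (\<forall>e\<in>E. e \<subseteq> V \<and> card e = 2)"

definition degree :: "'a set set \<Rightarrow> 'a \<Rightarrow> nat" where
  "degree E u = card {v. {u, v} \<in> E}"

definition sombor :: "'a set set \<Rightarrow> real" where
  "sombor E = (\<Sum>e\<in>E. sqrt (\<Sum>w\<in>e. (real (degree E w))\<^sup>2))"

text \<open>Link graph L_{q,h,k}: vertex (i,j) is vertex j of the i-th copy of C_q
(i < k, j < q), with cycle edges (i,j)(i,(j+1) mod q); x_i = (i,0) and
y_i = (i,h) (at distance h in C_q when h \<le> q div 2); link edges y_i x_{i+1}.\<close>

definition link_V :: "nat \<Rightarrow> nat \<Rightarrow> (nat \<times> nat) set" where
  "link_V q k = {..<k} \<times> {..<q}"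

definition link_E :: "nat \<Rightarrow> nat \<Rightarrow> nat \<Rightarrow> (nat \<times> nat) set set" where
  "link_E q h k =
     {{(i, j), (i, (j + 1) mod q)} | i j. i < k \<and> j < q}
     \<union> {{(i, h), (i + 1, 0)} | i. i + 1 < k}"

end

theory Submission
  imports Defs
begin

(* Every vertex has degree 2 inside its cycle, plus 1 if it is an endpoint of one of the
   k - 1 bridge edges y_i x_(i+1); call these 2(k - 1) vertices ports.  Since
   2 <= h <= q - 2, no two ports are adjacent on a cycle, so a cycle edge has weight
   sqrt(2^2 + 2^2) = 2 sqrt 2, or sqrt(2^2 + 3^2) = sqrt 13 for the 2 * 2(k - 1) cycle edges
   at a port, and each bridge edge has weight sqrt(3^2 + 3^2) = 3 sqrt 2.  Hence
   SO = (2qk - 8(k - 1)) sqrt 2 + 4(k - 1) sqrt 13 + 3(k - 1) sqrt 2. *)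

lemma mod_succ_pred:
  fixes j q :: nat
  assumes "j < q"
  shows "((j + q - 1) mod q + 1) mod q = j"
  using assms by (cases j) (auto simp: mod_if)

lemma mod_pred_succ:
  fixes j q :: nat
  assumes "j < q"
  shows "((j + 1) mod q + q - 1) mod q = j"
  using assms by (auto simp: mod_if)

lemma mod_succ_neq:
  fixes j q :: nat
  assumes "2 \<le> q" "j < q"
  shows "(j + 1) mod q \<noteq> j"
  using assms by (auto simp: mod_if)

lemma mod_succ_neq_pred:
  fixes j q :: nat
  assumes "3 \<le> q" "j < q"
  shows "(j + 1) mod q \<noteq> (j + q - 1) mod q"
  using assms by (cases j) (auto simp: mod_if)

lemma mod_succ_succ_neq:
  fixes j q :: nat
  assumes "3 \<le> q" "j < q"
  shows "j \<noteq> ((j + 1) mod q + 1) mod q"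
  using assms by (auto simp: mod_if)

lemma sum_lessThan_rotate:
  fixes f :: "nat \<Rightarrow> 'a::comm_monoid_add"
  shows "(\<Sum>j<q. f ((j + 1) mod q)) = (\<Sum>j<q. f j)"
  by (rule sum.reindex_bij_witness[where i = "\<lambda>j. (j + q - 1) mod q" and j = "\<lambda>j. (j + 1) mod q"])
    (simp_all add: mod_succ_pred[simplified] mod_pred_succ[simplified])

definition cycle_edges :: "nat \<Rightarrow> nat \<Rightarrow> (nat \<times> nat) set set" where
  "cycle_edges q k = {{(i, j), (i, (j + 1) mod q)} | i j. i < k \<and> j < q}"

definition bridge_edges :: "nat \<Rightarrow> nat \<Rightarrow> (nat \<times> nat) set set" where
  "bridge_edges h k = {{(i, h), (i + 1, 0)} | i. i + 1 < k}"

lemma link_E_eq: "link_E q h k = cycle_edges q k \<union> bridge_edges h k"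
  unfolding link_E_def cycle_edges_def bridge_edges_def ..

lemma simple_graph_link:
  assumes "2 \<le> q" "h < q"
  shows "simple_graph (link_V q k) (link_E q h k)"
proof -
  have "card {(i, j), (i, (j + 1) mod q)} = 2" if "j < q" for i j :: nat
    using assms that mod_succ_neq[of q j] by simp
  then show ?thesis
    using assms unfolding simple_graph_def link_V_def link_E_def by auto
qed

lemma cycle_edges_iff:
  assumes "3 \<le> q" "i < k" "j < q"
  shows "{(i, j), v} \<in> cycle_edges q k \<longleftrightarrow> v = (i, (j + 1) mod q) \<or> v = (i, (j + q - 1) mod q)"
proof
  assume "{(i, j), v} \<in> cycle_edges q k"
  then obtain j' where "j' < q" "{(i, j), v} = {(i, j'), (i, (j' + 1) mod q)}"
    unfolding cycle_edges_def by (auto simp: doubleton_eq_iff)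
  then show "v = (i, (j + 1) mod q) \<or> v = (i, (j + q - 1) mod q)"
    by (auto simp: doubleton_eq_iff mod_pred_succ[simplified])
next
  assume "v = (i, (j + 1) mod q) \<or> v = (i, (j + q - 1) mod q)"
  then show "{(i, j), v} \<in> cycle_edges q k"
  proof
    assume "v = (i, (j + 1) mod q)"
    then show ?thesis
      using assms unfolding cycle_edges_def by blast
  next
    let ?j' = "(j + q - 1) mod q"
    assume "v = (i, ?j')"
    then have "{(i, j), v} = {(i, ?j'), (i, (?j' + 1) mod q)}"
      using assms mod_succ_pred[of j q] by auto
    moreover have "?j' < q"
      using assms by simp
    ultimately show ?thesis
      using assms unfolding cycle_edges_def by blast
  qed
qed

lemma bridge_edges_iff:
  assumes "i < k"
  shows "{(i, j), v} \<in> bridge_edges h k \<longleftrightarrow>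
    (i + 1 < k \<and> j = h \<and> v = (i + 1, 0)) \<or> (0 < i \<and> j = 0 \<and> v = (i - 1, h))"
  using assms unfolding bridge_edges_def
  by (auto simp: doubleton_eq_iff) (rule exI[of _ "i - 1"], simp)

lemma cycle_edge_eq_iff:
  fixes i i' j j' :: nat
  assumes "3 \<le> q" "j < q"
  shows "{(i, j), (i, (j + 1) mod q)} = {(i', j'), (i', (j' + 1) mod q)} \<longleftrightarrow> i = i' \<and> j = j'"
  using mod_succ_succ_neq[OF assms] by (auto simp: doubleton_eq_iff)

text \<open>The ports are the vertices x_i (i > 1) and y_i (i < k) of the paper, indexed from 0 here.\<close>

fun is_port :: "nat \<Rightarrow> nat \<Rightarrow> nat \<times> nat \<Rightarrow> bool" where
  "is_port h k (i, j) \<longleftrightarrow> (0 < i \<and> j = 0) \<or> (i + 1 < k \<and> j = h)"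

lemma link_neighbours:
  assumes "3 \<le> q" "i < k" "j < q"
  shows "{v. {(i, j), v} \<in> link_E q h k} =
    {(i, (j + 1) mod q), (i, (j + q - 1) mod q)}
    \<union> (if 0 < i \<and> j = 0 then {(i - 1, h)} else {})
    \<union> (if i + 1 < k \<and> j = h then {(i + 1, 0)} else {})"
  using cycle_edges_iff[OF assms] bridge_edges_iff[OF assms(2)] unfolding link_E_eq by auto

lemma degree_link_E:
  assumes "3 \<le> q" "0 < h" "i < k" "j < q"
  shows "degree (link_E q h k) (i, j) = 2 + of_bool (is_port h k (i, j))"
  using mod_succ_neq_pred[OF assms(1,4)] assms
  unfolding degree_def link_neighbours[OF assms(1,3,4)] by (auto simp: card_insert_if)

definition sombor_weight :: "'a set set \<Rightarrow> 'a set \<Rightarrow> real" where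
  "sombor_weight E e = sqrt (\<Sum>w\<in>e. (real (degree E w))\<^sup>2)"

lemma sombor_eq_sum_weight: "sombor E = (\<Sum>e\<in>E. sombor_weight E e)"
  unfolding sombor_def sombor_weight_def ..

lemma sombor_weight_doubleton:
  "u \<noteq> v \<Longrightarrow> sombor_weight E {u, v} = sqrt ((real (degree E u))\<^sup>2 + (real (degree E v))\<^sup>2)"
  unfolding sombor_weight_def by simp

lemma sqrt_8: "sqrt 8 = 2 * sqrt 2"
  using real_sqrt_mult[of 4 2] by simp

lemma sqrt_sum_sq_two_three:
  assumes "\<not> (a \<and> b)"
  shows "sqrt ((2 + of_bool a)\<^sup>2 + (2 + of_bool b)\<^sup>2) =
    2 * sqrt 2 + (of_bool a + of_bool b) * (sqrt 13 - 2 * sqrt 2)"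
  using assms sqrt_8 by (cases a; cases b) (simp_all add: power2_eq_square)

lemma not_adjacent_ports:
  assumes "2 \<le> h" "h + 2 \<le> q" "j < q"
  shows "\<not> (is_port h k (i, j) \<and> is_port h k (i, (j + 1) mod q))"
  using assms by (auto simp: mod_if)

lemma sum_is_port_cycle:
  assumes "0 < h" "h < q"
  shows "(\<Sum>j<q. of_bool (is_port h k (i, j)) :: real) = of_bool (0 < i) + of_bool (i + 1 < k)"
proof -
  have "(\<Sum>j<q. of_bool (is_port h k (i, j)) :: real) =
      (\<Sum>j<q. of_bool (0 < i) * of_bool (j = 0) + of_bool (i + 1 < k) * of_bool (j = h))"
    using assms by (intro sum.cong) auto
  then show ?thesis
    using assms by (simp add: sum.distrib sum_distrib_left[symmetric])
qed

lemma sum_port_count_lessThan: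
  "(\<Sum>i<k. of_bool (0 < i) + of_bool (i + 1 < k) :: real) = 2 * real (k - 1)"
proof -
  have "{..<k} \<inter> {i. 0 < i} = {1..<k}" "{..<k} \<inter> {i. i + 1 < k} = {..<k - 1}"
    by auto
  then show ?thesis
    by (simp add: sum.distrib)
qed

lemma sum_sombor_weight_cycle_edges:
  assumes "2 \<le> h" "h + 2 \<le> q"
  shows "(\<Sum>e\<in>cycle_edges q k. sombor_weight (link_E q h k) e) =
    2 * real q * real k * sqrt 2 + 4 * real (k - 1) * (sqrt 13 - 2 * sqrt 2)"
proof -
  let ?edge = "\<lambda>(i, j). {(i, j), (i, (j + 1) mod q)}"
  let ?p = "\<lambda>i j. of_bool (is_port h k (i, j)) :: real"
  have q: "3 \<le> q"
    using assms by simp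
  have cycle_edges_image: "cycle_edges q k = ?edge ` ({..<k} \<times> {..<q})"
    unfolding cycle_edges_def by auto
  have "inj_on ?edge ({..<k} \<times> {..<q})"
  proof (rule inj_onI)
    fix x y
    assume "x \<in> {..<k} \<times> {..<q}" "y \<in> {..<k} \<times> {..<q}" "?edge x = ?edge y"
    then show "x = y"
      using cycle_edge_eq_iff[OF q] by (cases x; cases y) simp
  qed
  then have "(\<Sum>e\<in>cycle_edges q k. sombor_weight (link_E q h k) e) =
      (\<Sum>i<k. \<Sum>j<q. sombor_weight (link_E q h k) {(i, j), (i, (j + 1) mod q)})"
    unfolding cycle_edges_image by (simp add: sum.reindex sum.cartesian_product case_prod_unfold)
  also have "\<dots> = (\<Sum>i<k. \<Sum>j<q. 2 * sqrt 2 + (?p i j + ?p i ((j + 1) mod q)) * (sqrt 13 - 2 * sqrt 2))"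
  proof (intro sum.cong refl)
    fix i j
    assume "i \<in> {..<k}" "j \<in> {..<q}"
    moreover have "(j + 1) mod q \<noteq> j"
      using q \<open>j \<in> {..<q}\<close> mod_succ_neq[of q j] by simp
    ultimately have "sombor_weight (link_E q h k) {(i, j), (i, (j + 1) mod q)} =
        sqrt ((2 + ?p i j)\<^sup>2 + (2 + ?p i ((j + 1) mod q))\<^sup>2)"
      using assms q by (simp add: sombor_weight_doubleton degree_link_E del: is_port.simps)
    also have "\<dots> = 2 * sqrt 2 + (?p i j + ?p i ((j + 1) mod q)) * (sqrt 13 - 2 * sqrt 2)"
      using not_adjacent_ports[OF assms] \<open>j \<in> {..<q}\<close> by (simp add: sqrt_sum_sq_two_three del: is_port.simps)
    finally show "sombor_weight (link_E q h k) {(i, j), (i, (j + 1) mod q)} =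
        2 * sqrt 2 + (?p i j + ?p i ((j + 1) mod q)) * (sqrt 13 - 2 * sqrt 2)" .
  qed
  also have "\<dots> = (\<Sum>i<k. 2 * real q * sqrt 2 + 2 * (of_bool (0 < i) + of_bool (i + 1 < k)) * (sqrt 13 - 2 * sqrt 2))"
  proof (intro sum.cong refl)
    fix i
    have "(\<Sum>j<q. ?p i ((j + 1) mod q)) = (\<Sum>j<q. ?p i j)"
      by (rule sum_lessThan_rotate)
    then show "(\<Sum>j<q. 2 * sqrt 2 + (?p i j + ?p i ((j + 1) mod q)) * (sqrt 13 - 2 * sqrt 2)) =
        2 * real q * sqrt 2 + 2 * (of_bool (0 < i) + of_bool (i + 1 < k)) * (sqrt 13 - 2 * sqrt 2)"
      using assms sum_is_port_cycle[of h q k i]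
      by (simp add: sum.distrib sum_distrib_right[symmetric] del: is_port.simps)
  qed
  also have "\<dots> = real k * (2 * real q * sqrt 2) +
      2 * (\<Sum>i<k. of_bool (0 < i) + of_bool (i + 1 < k)) * (sqrt 13 - 2 * sqrt 2)"
    by (simp add: sum.distrib sum_distrib_left[symmetric] sum_distrib_right[symmetric])
  also have "\<dots> = 2 * real q * real k * sqrt 2 + 4 * real (k - 1) * (sqrt 13 - 2 * sqrt 2)"
    unfolding sum_port_count_lessThan by simp
  finally show ?thesis .
qed

lemma sum_sombor_weight_bridge_edges:
  assumes "3 \<le> q" "0 < h" "h < q"
  shows "(\<Sum>e\<in>bridge_edges h k. sombor_weight (link_E q h k) e) = 3 * real (k - 1) * sqrt 2"
proof -
  have bridge_edges_image: "bridge_edges h k = (\<lambda>i. {(i, h), (i + 1, 0)}) ` {..<k - 1}"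
    unfolding bridge_edges_def by auto
  have "inj_on (\<lambda>i. {(i, h), (i + 1, 0)}) {..<k - 1}"
    by (auto simp: inj_on_def doubleton_eq_iff)
  then have "(\<Sum>e\<in>bridge_edges h k. sombor_weight (link_E q h k) e) =
      (\<Sum>i<k - 1. sombor_weight (link_E q h k) {(i, h), (i + 1, 0)})"
    unfolding bridge_edges_image by (simp add: sum.reindex)
  also have "\<dots> = (\<Sum>i<k - 1. 3 * sqrt 2)"
  proof (intro sum.cong refl)
    fix i
    assume "i \<in> {..<k - 1}"
    then have "degree (link_E q h k) (i, h) = 3" "degree (link_E q h k) (i + 1, 0) = 3"
      using assms by (simp_all add: degree_link_E)
    moreover have "sqrt (3\<^sup>2 + 3\<^sup>2) = 3 * sqrt 2"
      using real_sqrt_mult[of 9 2] by simp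
    ultimately show "sombor_weight (link_E q h k) {(i, h), (i + 1, 0)} = 3 * sqrt 2"
      by (simp add: sombor_weight_doubleton)
  qed
  finally show ?thesis
    by simp
qed

lemma simple_graph_finite_edges: "simple_graph V E \<Longrightarrow> finite E"
  unfolding simple_graph_def by (meson PowI finite_Pow_iff finite_subset subsetI)

lemma cycle_edges_bridge_edges_disjoint: "cycle_edges q k \<inter> bridge_edges h k = {}"
  unfolding cycle_edges_def bridge_edges_def by (auto simp: doubleton_eq_iff)

theorem mainTheorem9:
  fixes q h k :: nat
  assumes "q \<ge> 3" and "k \<ge> 1" and "h \<ge> 2" and "h \<le> q div 2"
  shows "simple_graph (link_V q k) (link_E q h k) \<and>
         sombor (link_E q h k) =
           (2 * real q * real k - 5 * real k + 5) * sqrt 2 + (4 * real k - 4) * sqrt 13"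
proof
  have h: "2 \<le> h" "h + 2 \<le> q"
    using assms by linarith+
  show "simple_graph (link_V q k) (link_E q h k)"
    using h by (intro simple_graph_link) auto
  then have "finite (cycle_edges q k)" "finite (bridge_edges h k)"
    using simple_graph_finite_edges by (auto simp: link_E_eq)
  then have "sombor (link_E q h k) =
      (\<Sum>e\<in>cycle_edges q k. sombor_weight (link_E q h k) e) +
      (\<Sum>e\<in>bridge_edges h k. sombor_weight (link_E q h k) e)"
    using cycle_edges_bridge_edges_disjoint
    by (simp only: sombor_eq_sum_weight link_E_eq sum.union_disjoint)
  also have "\<dots> = 2 * real q * real k * sqrt 2 + 4 * real (k - 1) * (sqrt 13 - 2 * sqrt 2) +
      3 * real (k - 1) * sqrt 2"
    using h by (simp add: sum_sombor_weight_cycle_edges sum_sombor_weight_bridge_edges)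
  also have "\<dots> = (2 * real q * real k - 5 * real k + 5) * sqrt 2 + (4 * real k - 4) * sqrt 13"
    using assms(2) by (simp add: algebra_simps)
  finally show "sombor (link_E q h k) =
      (2 * real q * real k - 5 * real k + 5) * sqrt 2 + (4 * real k - 4) * sqrt 13" .
qed

end
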